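(* Let $\epsilon=\frac{-1+i\sqrt3}{2}$ and let $D$ be the $\mathbb Q(\epsilon)$-algebra generated by $x,y$ subject to $x^3=2$, $y^3=2$, $yx=\epsilon xy$ (a central division algebra over $\mathbb Q(\epsilon)$), with the involution $\ast$ determined by $\epsilon^\ast=\epsilon^{-1}$, $x^\ast=x$, $y^\ast=y$. Then every maximal subfield $K$ of $D$ with $K^\ast\subseteq K$ is formally real with respect to $\ast|_K$, but $(D,\ast)$ is not formally real; explicitly, $d_1^\ast d_1+d_2^\ast d_2+d_3^\ast d_3+d_4^\ast d_4=0$ for $d_1=\epsilon^{-1}x+x^2+2y$, $d_2=1-\epsilon^{-1}xy-x^2y^2$, $d_3=2x-x^2+xy^2$, $d_4=3-x-x^2$.
   Context: An involution $\#$ on a ring $R$ is formally real if every finite sum of nonzero elements of the form $rr^\#$ ($r\in R$) is nonzero. A maximal subfield is a subfield equal to its own centralizer. *)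

theory Defs
  imports Complex_Main "HOL-Algebra.Algebra"
begin

definition eps :: complex where
  "eps = Complex (-1/2) (sqrt 3 / 2)"

definition Qeps :: "complex set" where
  "Qeps = {of_rat a + of_rat b * eps | a b. True}"

text \<open>Elements of D are written uniquely as sums of c(i,j) x^i y^j with 0 <= i,j < 3 and
  c(i,j) in Q(epsilon); we represent them by their coefficient functions.\<close>
type_synonym delt = "nat \<Rightarrow> nat \<Rightarrow> complex"

definition Dcar :: "delt set" where
  "Dcar = {f. (\<forall>i j. f i j \<in> Qeps) \<and> (\<forall>i j. (3 \<le> i \<or> 3 \<le> j) \<longrightarrow> f i j = 0)}"

definition dadd :: "delt \<Rightarrow> delt \<Rightarrow> delt" where
  "dadd f g = (\<lambda>i j. f i j + g i j)"

definition dzero :: delt where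
  "dzero = (\<lambda>i j. 0)"

definition done_D :: delt where
  "done_D = (\<lambda>i j. if i = 0 \<and> j = 0 then 1 else 0)"

text \<open>Multiplication from x^a y^b * x^c y^d = eps^(b c) x^(a+c) y^(b+d) (since y x = eps x y),
  reduced with x^3 = 2, y^3 = 2.\<close>
definition dmul :: "delt \<Rightarrow> delt \<Rightarrow> delt" where
  "dmul f g = (\<lambda>i j. if i < 3 \<and> j < 3 then
      (\<Sum>a<3. \<Sum>b<3. \<Sum>c<3. \<Sum>d<3.
         if (a + c) mod 3 = i \<and> (b + d) mod 3 = j
         then f a b * g c d * eps ^ (b * c) * 2 ^ ((a + c) div 3 + (b + d) div 3)
         else 0)
    else 0)"

definition D :: "delt ring" where
  "D = \<lparr>carrier = Dcar, monoid.mult = dmul, one = done_D, ring.zero = dzero, ring.add = dadd\<rparr>"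

definition sc :: "complex \<Rightarrow> delt" where
  "sc c = (\<lambda>i j. if i = 0 \<and> j = 0 then c else 0)"

definition gx :: delt where
  "gx = (\<lambda>i j. if i = 1 \<and> j = 0 then 1 else 0)"

definition gy :: delt where
  "gy = (\<lambda>i j. if i = 0 \<and> j = 1 then 1 else 0)"

text \<open>The involution: eps* = eps^-1 (complex conjugation on Q(eps)), x* = x, y* = y, and
  it is an anti-automorphism, so (c x^i y^j)* = cnj c y^j x^i = cnj c eps^(i j) x^i y^j.\<close>
definition dstar :: "delt \<Rightarrow> delt" where
  "dstar f = (\<lambda>i j. cnj (f i j) * eps ^ (i * j))"

definition centralizer_D :: "delt set \<Rightarrow> delt set" where
  "centralizer_D K = {d \<in> carrier D. \<forall>k\<in>K. d \<otimes>\<^bsub>D\<^esub> k = k \<otimes>\<^bsub>D\<^esub> d}"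

definition maximal_subfield_D :: "delt set \<Rightarrow> bool" where
  "maximal_subfield_D K \<longleftrightarrow> subfield K D \<and> centralizer_D K = K"

definition formally_real_D :: "delt set \<Rightarrow> bool" where
  "formally_real_D S \<longleftrightarrow>
     (\<forall>(n::nat) (r::nat \<Rightarrow> delt). n \<ge> 1 \<longrightarrow>
        (\<forall>i<n. r i \<in> S \<and> r i \<otimes>\<^bsub>D\<^esub> dstar (r i) \<noteq> \<zero>\<^bsub>D\<^esub>) \<longrightarrow>
        finsum D (\<lambda>i. r i \<otimes>\<^bsub>D\<^esub> dstar (r i)) {..<n} \<noteq> \<zero>\<^bsub>D\<^esub>)"

definition d1 :: delt where
  "d1 = sc (inverse eps) \<otimes>\<^bsub>D\<^esub> gx \<oplus>\<^bsub>D\<^esub> gx \<otimes>\<^bsub>D\<^esub> gx \<oplus>\<^bsub>D\<^esub> sc 2 \<otimes>\<^bsub>D\<^esub> gy"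

definition d2 :: delt where
  "d2 = \<one>\<^bsub>D\<^esub> \<ominus>\<^bsub>D\<^esub> sc (inverse eps) \<otimes>\<^bsub>D\<^esub> gx \<otimes>\<^bsub>D\<^esub> gy
          \<ominus>\<^bsub>D\<^esub> gx \<otimes>\<^bsub>D\<^esub> gx \<otimes>\<^bsub>D\<^esub> gy \<otimes>\<^bsub>D\<^esub> gy"

definition d3 :: delt where
  "d3 = sc 2 \<otimes>\<^bsub>D\<^esub> gx \<ominus>\<^bsub>D\<^esub> gx \<otimes>\<^bsub>D\<^esub> gx \<oplus>\<^bsub>D\<^esub> gx \<otimes>\<^bsub>D\<^esub> gy \<otimes>\<^bsub>D\<^esub> gy"

definition d4 :: delt where
  "d4 = sc 3 \<ominus>\<^bsub>D\<^esub> gx \<ominus>\<^bsub>D\<^esub> gx \<otimes>\<^bsub>D\<^esub> gx"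

end

theory Submission
  imports Defs "HOL-Library.Function_Algebras" "HOL-Computational_Algebra.Primes"
begin

(* For the positive part let K be a maximal subfield.  It contains the centre Q(eps), and the
   tower law 9 = [K : Q(eps)] [D : K] with K noncentral and D noncommutative gives
   [K : Q(eps)] = 3.  If K is *-stable it contains a noncentral hermitian h, so h^2, h, 1 is a
   basis; the coordinates of the hermitian element h^3 are real, so h satisfies a real cubic with
   a real root rho.  Evaluating at rho embeds K into C compatibly with the involution, mapping
   r r* to |chi r|^2, so no sum of nonzero norms vanishes. *)

lemma factor_nine: "(n::nat) * m = 9 \<Longrightarrow> n \<noteq> 1 \<Longrightarrow> m \<noteq> 1 \<Longrightarrow> n = 3"
proof -
  assume nm: "n * m = 9" "n \<noteq> 1" "m \<noteq> 1"
  obtain i j where ij: "n = 3 ^ i" "m = 3 ^ j"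
    using prime_power_mult_nat[of 3 n m 2] nm(1) by auto
  hence "3 ^ (i + j) = (3::nat) ^ 2" using nm(1) by (simp add: power_add)
  hence "i + j = 2" using power_inject_exp[of "3::nat" "i + j" 2] by simp
  thus "n = 3" using ij nm(2,3) by (cases i; cases j) auto
qed

(* Every real cubic t^3 = A t^2 + B t + C has a real root (intermediate value theorem on
   [-M, M] with M = 1 + |A| + |B| + |C|, where the cubic term dominates). *)
lemma real_cubic_root: "\<exists>t::real. t ^ 3 = A * t\<^sup>2 + B * t + C"
proof -
  define M where "M = 1 + \<bar>A\<bar> + \<bar>B\<bar> + \<bar>C\<bar>"
  have M1: "M \<ge> 1" unfolding M_def by simp
  have M2: "M \<le> M\<^sup>2" using mult_left_mono[of 1 M M] M1 by (simp add: power2_eq_square)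
  have dominated: "\<bar>A * x\<^sup>2 + B * x + C\<bar> < M ^ 3" if x: "\<bar>x\<bar> = M" for x
  proof -
    have "\<bar>A * x\<^sup>2 + B * x + C\<bar> \<le> \<bar>A * x\<^sup>2\<bar> + \<bar>B * x\<bar> + \<bar>C\<bar>"
      using abs_triangle_ineq[of "A * x\<^sup>2 + B * x" C] abs_triangle_ineq[of "A * x\<^sup>2" "B * x"]
      by linarith
    also have "\<dots> = \<bar>A\<bar> * M\<^sup>2 + \<bar>B\<bar> * M + \<bar>C\<bar>"
      using x power2_abs[of x] by (simp add: abs_mult)
    also have "\<dots> \<le> \<bar>A\<bar> * M\<^sup>2 + \<bar>B\<bar> * M\<^sup>2 + \<bar>C\<bar> * M\<^sup>2"
      using mult_left_mono[OF M2, of "\<bar>B\<bar>"] mult_left_mono[of 1 "M\<^sup>2" "\<bar>C\<bar>"] M1 M2 by simp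
    also have "\<dots> = (M - 1) * M\<^sup>2" unfolding M_def by (simp add: algebra_simps)
    also have "\<dots> < M * M\<^sup>2" using M1 by (intro mult_strict_right_mono) auto
    also have "\<dots> = M ^ 3" by (simp add: power3_eq_cube power2_eq_square)
    finally show ?thesis .
  qed
  define f where "f = (\<lambda>t::real. t ^ 3 - (A * t\<^sup>2 + B * t + C))"
  have "f (- M) \<le> 0" "0 \<le> f M"
    using dominated[of M] dominated[of "- M"] M1 unfolding f_def
    by (simp_all add: power3_eq_cube)
  moreover have "continuous_on {- M..M} f" unfolding f_def by (intro continuous_intros)
  ultimately obtain t where "f t = 0"
    using IVT'[of f "- M" 0 M] M1 by auto
  thus ?thesis unfolding f_def by auto
qed

lemma (in ring) Span_one: "subfield F R \<Longrightarrow> Span F [\<one>] = F"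
  using line_extension_mem_iff[of _ F \<one> "{\<zero>}"] subfieldE(3)[of F R]
  by (auto simp add: rev_subsetD)

lemma (in ring) dimension_one_eq:
  assumes F: "subfield F R" and dim: "dimension 1 F E" and one: "\<one> \<in> E"
  shows "E = F"
proof -
  have "independent F [\<one>]"
    using subfieldE(6)[OF F] by (intro li_Cons) auto
  then obtain Vs where "length (Vs @ [\<one>]) = 1" "Span F (Vs @ [\<one>]) = E"
    using complete_base[OF F dim \<open>independent F [\<one>]\<close>] one by auto
  thus ?thesis using Span_one[OF F] by simp
qed

lemma (in ring) independent_in_subring:
  assumes "subring K R" "set Us \<subseteq> K" "independent F Us"
  shows "ring.independent (R\<lparr>carrier := K\<rparr>) F Us"
proof -
  interpret KR: ring "R\<lparr>carrier := K\<rparr>" using subring_is_ring[OF assms(1)] .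
  show ?thesis using assms(2,3)
  proof (induct Us)
    case (Cons u Us)
    show ?case
      using Cons independent_backwards[OF Cons(3)] Span_consistent[OF assms(1)] by (auto intro!: KR.li_Cons)
  qed simp
qed

(* Enlarging the base field keeps the whole ring finite-dimensional: a spanning list over F
   also spans over S \<supseteq> F. *)
lemma (in ring) finite_dimension_larger_field:
  assumes F: "subfield F R" and S: "subfield S R" and "F \<subseteq> S" and dim: "dimension n F (carrier R)"
  shows "finite_dimension S (carrier R)"
proof -
  obtain Us where Us: "set Us \<subseteq> carrier R" "Span F Us = carrier R"
    using exists_base[OF F dim] by blast
  hence "Span S Us = carrier R"
    using \<open>F \<subseteq> S\<close> Span_in_carrier[OF subfieldE(3)[OF S] Us(1)]
    unfolding Span_eq_combine_set[OF F Us(1)] Span_eq_combine_set[OF S Us(1)] by blast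
  thus ?thesis using Span_finite_dimension[OF S Us(1)] by simp
qed

lemma (in field) prime_degree_exp_base:
  assumes F: "subfield F R" and dim: "dimension p F (carrier R)" and p: "Factorial_Ring.prime p"
    and x: "x \<in> carrier R" "x \<notin> F"
  shows "independent F (exp_base x p) \<and> Span F (exp_base x p) = carrier R"
proof -
  have alg: "(algebraic over F) x"
    using finite_dimension_imp_algebraic[OF F carrier_is_subring finite_dimensionI[OF dim] x(1)] .
  define S where "S = simple_extension F x"
  define d where "d = degree (Irr F x)"
  have S_field: "subfield S R"
    unfolding S_def using simple_extension_is_subfield[OF F x(1)] alg by simp
  have dim_S: "dimension d F S"
    unfolding S_def d_def by (rule dimension_simple_extension[OF F x(1) alg])
  have "F \<subseteq> S" unfolding S_def using simple_extension_incl[OF subfieldE(3)[OF F] x(1)] .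
  then obtain m where dim_R: "dimension m S (carrier R)"
    using finite_dimension_larger_field[OF F S_field _ dim] by auto
  hence "dimension (d * m) F (carrier R)" by (rule telescopic_base[OF F S_field dim_S])
  hence "Factorial_Ring.prime (d * m)" using dimension_is_inj[OF F _ dim] p by blast
  moreover have "d \<noteq> 1"
  proof
    assume "d = 1"
    hence "S = F" using dimension_one_eq[OF F] dim_S subringE(3)[OF subfieldE(1)[OF S_field]] by simp
    thus False using simple_extension_mem[OF subfieldE(1)[OF F] x(1)] x(2) unfolding S_def by simp
  qed
  ultimately have "m = 1" by (metis prime_product)
  hence "carrier R = S" using dimension_one_eq[OF S_field] dim_R by simp
  moreover have "d = p" using \<open>m = 1\<close> \<open>dimension (d * m) F (carrier R)\<close> dimension_is_inj[OF F _ dim] by simp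
  ultimately show ?thesis
    using exp_base_independent[OF F x(1) alg] Span_exp_base[OF F x(1) alg] unfolding S_def d_def by simp
qed

lemma eps_sq: "eps\<^sup>2 = -1 - eps"
  by (simp add: eps_def power2_eq_square complex_eq_iff field_simps;
      simp add: algebra_simps flip: power2_eq_square)

lemma eps_cube: "eps ^ 3 = 1"
proof -
  have "eps ^ 3 = eps * eps\<^sup>2" by (simp add: power3_eq_cube power2_eq_square)
  also have "\<dots> = 1" by (simp add: eps_sq algebra_simps) (simp add: eps_sq flip: power2_eq_square)
  finally show ?thesis .
qed

lemma eps_pow_mod: "eps ^ n = eps ^ (n mod 3)"
proof -
  have "eps ^ n = eps ^ (3 * (n div 3) + n mod 3)" by (metis div_mult_mod_eq mult.commute)
  also have "\<dots> = eps ^ (n mod 3)" unfolding power_add power_mult eps_cube by simp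
  finally show ?thesis .
qed

lemma eps_pow_cong: "m mod 3 = n mod 3 \<Longrightarrow> eps ^ m = eps ^ n"
  by (metis eps_pow_mod)

lemma eps_nonzero: "eps \<noteq> 0" and eps_ne_one: "eps \<noteq> 1" and Im_eps: "Im eps = sqrt 3 / 2"
  by (simp_all add: eps_def complex_eq_iff)

lemma cnj_eps: "cnj eps = eps\<^sup>2"
  by (simp add: eps_sq) (simp add: eps_def complex_eq_iff)

lemma inverse_eps: "inverse eps = eps\<^sup>2"
  using eps_cube by (simp add: field_simps eps_nonzero)
    (metis power3_eq_cube power2_eq_square mult.assoc)

lemma cnj_eps_mult_eps: "cnj (eps ^ n) * eps ^ n = 1"
proof -
  have "cnj eps * eps = 1" using eps_cube by (simp add: cnj_eps power3_eq_cube power2_eq_square)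
  thus ?thesis by (metis complex_cnj_power power_mult_distrib power_one)
qed

lemma eps_reduce: "cnj eps = -1 - eps" "eps\<^sup>2 = -1 - eps" "eps ^ 3 = 1" "eps ^ 4 = eps"
   "eps ^ 5 = -1 - eps" "eps ^ 6 = 1" "eps ^ 7 = eps" "eps ^ 8 = -1 - eps"
   "eps * eps = -1 - eps" "eps * (eps * x) = - x - eps * x"
  using cnj_eps eps_sq eps_cube eps_pow_mod[of 4] eps_pow_mod[of 5] eps_pow_mod[of 6]
    eps_pow_mod[of 7] eps_pow_mod[of 8]
  by (auto simp: power2_eq_square algebra_simps)
    (metis mult.assoc mult_minus_left distrib_right mult_1)

lemma Qeps_iff: "z \<in> Qeps \<longleftrightarrow> (\<exists>a b. z = of_rat a + of_rat b * eps)"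
  by (auto simp: Qeps_def)

lemma Qeps_rat [simp]: "of_rat a \<in> Qeps"
  unfolding Qeps_iff by (rule exI[of _ a], rule exI[of _ 0]) simp

lemma Qeps_0 [simp]: "0 \<in> Qeps" and Qeps_1 [simp]: "1 \<in> Qeps"
  and Qeps_numeral [simp]: "numeral n \<in> Qeps"
  using Qeps_rat[of 0] Qeps_rat[of 1] Qeps_rat[of "numeral n"] by simp_all

lemma Qeps_eps [simp]: "eps \<in> Qeps"
  unfolding Qeps_iff by (rule exI[of _ 0], rule exI[of _ 1]) simp

lemma Qeps_add [simp]: "x \<in> Qeps \<Longrightarrow> y \<in> Qeps \<Longrightarrow> x + y \<in> Qeps"
  unfolding Qeps_iff
  by (auto, rule_tac x="a+aa" in exI, rule_tac x="b+ba" in exI, simp add: of_rat_add algebra_simps)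

lemma Qeps_uminus [simp]: "x \<in> Qeps \<Longrightarrow> - x \<in> Qeps"
  unfolding Qeps_iff
  by (auto, rule_tac x="-a" in exI, rule_tac x="-b" in exI, simp add: of_rat_minus algebra_simps)

lemma Qeps_diff [simp]: "x \<in> Qeps \<Longrightarrow> y \<in> Qeps \<Longrightarrow> x - y \<in> Qeps"
  using Qeps_add[of x "-y"] by simp

lemma Qeps_mult [simp]: "x \<in> Qeps \<Longrightarrow> y \<in> Qeps \<Longrightarrow> x * y \<in> Qeps"
proof -
  assume "x \<in> Qeps" "y \<in> Qeps"
  then obtain a b c d where x: "x = of_rat a + of_rat b * eps" and y: "y = of_rat c + of_rat d * eps"
    unfolding Qeps_iff by blast
  have "x * y = of_rat a * of_rat c + (of_rat a * of_rat d + of_rat b * of_rat c) * eps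
                + of_rat b * of_rat d * (eps * eps)"
    unfolding x y by (simp add: algebra_simps)
  also have "\<dots> = of_rat (a * c - b * d) + of_rat (a * d + b * c - b * d) * eps"
    unfolding eps_reduce(9) by (simp add: of_rat_add of_rat_mult of_rat_diff algebra_simps)
  finally show ?thesis unfolding Qeps_iff by blast
qed

lemma Qeps_pow [simp]: "x \<in> Qeps \<Longrightarrow> x ^ n \<in> Qeps"
  by (induct n) auto

lemma Qeps_sum [simp]: "(\<And>x. x \<in> A \<Longrightarrow> f x \<in> Qeps) \<Longrightarrow> sum f A \<in> Qeps"
  by (induct A rule: infinite_finite_induct) auto

lemma Qeps_cnj [simp]: "x \<in> Qeps \<Longrightarrow> cnj x \<in> Qeps"
proof -
  assume "x \<in> Qeps"
  then obtain a b where x: "x = of_rat a + of_rat b * eps" unfolding Qeps_iff by blast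
  have "cnj x = of_rat a + of_rat b * cnj eps" unfolding x by (simp add: of_rat_def)
  thus ?thesis by (simp add: cnj_eps)
qed

(* The real elements of Q(eps) are rational, since Im eps \<noteq> 0. *)
lemma Qeps_real_rat: "x \<in> Qeps \<Longrightarrow> Im x = 0 \<Longrightarrow> x \<in> \<rat>"
proof -
  assume x: "x \<in> Qeps" "Im x = 0"
  then obtain a b where ab: "x = of_rat a + of_rat b * eps" unfolding Qeps_iff by blast
  hence "of_rat b * Im eps = (0::real)" using x(2) by (simp add: of_rat_def)
  hence "b = 0" using Im_eps by simp
  thus ?thesis using ab by simp
qed

lemma Qeps_inverse [simp]: "x \<in> Qeps \<Longrightarrow> inverse x \<in> Qeps"
proof (cases "x = 0")
  case False
  assume x: "x \<in> Qeps"
  have "inverse x = cnj x * inverse (x * cnj x)" using False by (simp add: field_simps)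
  moreover have "x * cnj x \<in> \<rat>"
    by (rule Qeps_real_rat[OF Qeps_mult[OF x Qeps_cnj[OF x]]]) (simp add: complex_mult_cnj)
  then obtain q where "x * cnj x = of_rat q" by (auto elim!: Rats_cases)
  hence "inverse (x * cnj x) \<in> Qeps" by (simp only: flip: of_rat_inverse) simp
  ultimately show ?thesis using x Qeps_mult Qeps_cnj by metis
qed simp

lemma Qeps_divide [simp]: "x \<in> Qeps \<Longrightarrow> y \<in> Qeps \<Longrightarrow> x / y \<in> Qeps"
  by (simp add: divide_inverse)

definition mon :: "complex \<Rightarrow> nat \<Rightarrow> nat \<Rightarrow> delt" where
  "mon c a b = (\<lambda>i j. if i = a \<and> j = b then c else 0)"

definition reduced :: "delt \<Rightarrow> bool" where
  "reduced f \<longleftrightarrow> (\<forall>i j. (3 \<le> i \<or> 3 \<le> j) \<longrightarrow> f i j = 0)"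

lemma mon_eq_iff: "mon c a b = mon c' a b \<longleftrightarrow> c = c'"
  and mon_eq_0_iff: "mon c a b = 0 \<longleftrightarrow> c = 0"
  and mon_add: "mon c a b + mon c' a b = mon (c + c') a b"
  and mon_uminus: "- mon c a b = mon (- c) a b"
  by (auto simp: mon_def fun_eq_iff)

lemma reduced_mon [simp]: "a < 3 \<Longrightarrow> b < 3 \<Longrightarrow> reduced (mon c a b)"
  and reduced_add [simp]: "reduced f \<Longrightarrow> reduced g \<Longrightarrow> reduced (f + g)"
  by (auto simp: reduced_def mon_def)

lemma sum_apply: "(\<Sum>x\<in>A. (F x :: delt)) i j = (\<Sum>x\<in>A. F x i j)"
  by (induct A rule: infinite_finite_induct) auto

lemma mon_decomp: assumes "reduced f" shows "f = (\<Sum>a<3. \<Sum>b<3. mon (f a b) a b)"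
proof (intro ext)
  fix i j
  have "(\<Sum>a<3. \<Sum>b<3. mon (f a b) a b) i j
        = (\<Sum>a<3. \<Sum>b<3. if b = j then (if a = i then f a b else 0) else 0)"
    by (simp add: sum_apply mon_def) (intro sum.cong refl, auto)
  also have "\<dots> = f i j" using assms unfolding reduced_def by (cases "j < 3") (auto simp: sum.delta)
  finally show "f i j = (\<Sum>a<3. \<Sum>b<3. mon (f a b) a b) i j" by simp
qed

lemma dmul_mon:
  assumes "a < 3" "b < 3" "c < 3" "d < 3"
  shows "dmul (mon u a b) (mon v c d) =
    mon (u * v * eps ^ (b * c) * 2 ^ ((a + c) div 3 + (b + d) div 3)) ((a + c) mod 3) ((b + d) mod 3)"
proof (intro ext)
  fix i j
  let ?G = "\<lambda>a b c d. if (a + c) mod 3 = i \<and> (b + d) mod 3 = j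
         then u * v * eps ^ (b * c) * 2 ^ ((a + c) div 3 + (b + d) div 3) else 0"
  show "dmul (mon u a b) (mon v c d) i j =
      mon (u * v * eps ^ (b * c) * 2 ^ ((a + c) div 3 + (b + d) div 3)) ((a + c) mod 3) ((b + d) mod 3) i j"
  proof (cases "i < 3 \<and> j < 3")
    case True
    have "dmul (mon u a b) (mon v c d) i j = (\<Sum>a'<3. \<Sum>b'<3. \<Sum>c'<3. \<Sum>d'<3.
         if (a' + c') mod 3 = i \<and> (b' + d') mod 3 = j
         then mon u a b a' b' * mon v c d c' d' * eps ^ (b' * c') * 2 ^ ((a' + c') div 3 + (b' + d') div 3)
         else 0)"
      using True by (simp add: dmul_def)
    also have "\<dots> = (\<Sum>a'<3. \<Sum>b'<3. \<Sum>c'<3. \<Sum>d'<3.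
          if d' = d then if c' = c then if b' = b then if a' = a then ?G a' b' c' d'
          else 0 else 0 else 0 else 0)"
      by (intro sum.cong refl) (auto simp: mon_def)
    also have "\<dots> = ?G a b c d" using assms by (simp add: sum.delta)
    finally show ?thesis unfolding mon_def using True by auto
  qed (auto simp: mon_def dmul_def)
qed

definition mul_weight :: "nat \<Rightarrow> nat \<Rightarrow> nat \<Rightarrow> nat \<Rightarrow> nat \<Rightarrow> nat \<Rightarrow> complex" where
  "mul_weight i j a b c d = (if (a + c) mod 3 = i \<and> (b + d) mod 3 = j
     then eps ^ (b * c) * 2 ^ ((a + c) div 3 + (b + d) div 3) else 0)"

lemma dmul_bilinear: "dmul f g = (\<lambda>i j. if i < 3 \<and> j < 3 then
   (\<Sum>a<3. \<Sum>b<3. \<Sum>c<3. \<Sum>d<3. mul_weight i j a b c d * (f a b * g c d)) else 0)"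
  unfolding dmul_def mul_weight_def by (intro ext) (auto intro!: sum.cong)

lemma dmul_add_left: "dmul (f + g) h = dmul f h + dmul g h"
  and dmul_add_right: "dmul h (f + g) = dmul h f + dmul h g"
  and dmul_zero_left: "dmul 0 h = 0"
  and dmul_zero_right: "dmul h 0 = 0"
  and dmul_scale_left: "dmul (\<lambda>i j. c * f i j) g = (\<lambda>i j. c * dmul f g i j)"
  and dmul_scale_right: "dmul g (\<lambda>i j. c * f i j) = (\<lambda>i j. c * dmul g f i j)"
  unfolding dmul_bilinear
  by (simp_all add: fun_eq_iff distrib_right distrib_left sum.distrib sum_distrib_left
      mult.assoc mult.left_commute)

lemma dmul_sum_left: "dmul (\<Sum>x\<in>A. F x) g = (\<Sum>x\<in>A. dmul (F x) g)"
  using sum_comp_morphism[of "\<lambda>f. dmul f g" F A] dmul_zero_left dmul_add_left by (simp add: o_def)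

lemma dmul_sum_right: "dmul g (\<Sum>x\<in>A. F x) = (\<Sum>x\<in>A. dmul g (F x))"
  using sum_comp_morphism[of "\<lambda>f. dmul g f" F A] dmul_zero_right dmul_add_right by (simp add: o_def)

lemma dmul_expand_left: "reduced f \<Longrightarrow> dmul f g = (\<Sum>a<3. \<Sum>b<3. dmul (mon (f a b) a b) g)"
  by (subst mon_decomp) (simp_all only: dmul_sum_left)

lemma dmul_expand_right: "reduced g \<Longrightarrow> dmul f g = (\<Sum>c<3. \<Sum>d<3. dmul f (mon (g c d) c d))"
  by (subst mon_decomp) (simp_all only: dmul_sum_right)

lemma dmul_expand:
  "reduced f \<Longrightarrow> reduced g \<Longrightarrow>
     dmul f g = (\<Sum>a<3. \<Sum>b<3. \<Sum>c<3. \<Sum>d<3. dmul (mon (f a b) a b) (mon (g c d) c d))"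
  by (subst dmul_expand_left, assumption, subst dmul_expand_right, assumption) (rule refl)

lemma less_3_cases: "(n::nat) < 3 \<Longrightarrow> n = 0 \<or> n = 1 \<or> n = 2" by auto

(* Associativity on monomials reduces to three identities on exponents modulo 3. *)
lemma dmul_mon_assoc:
  assumes "a < 3" "b < 3" "c < 3" "d < 3" "e < 3" "g < 3"
  shows "dmul (dmul (mon u a b) (mon v c d)) (mon w e g) = dmul (mon u a b) (dmul (mon v c d) (mon w e g))"
proof -
  have carry: "(p + q) div 3 + ((p + q) mod 3 + s) div 3 = (q + s) div 3 + (p + (q + s) mod 3) div 3"
    if "p < 3" "q < 3" "s < 3" for p q s :: nat
    using that by (elim less_3_cases[elim_format] disjE) simp_all
  have twist: "(b * c + ((b + d) mod 3) * e) mod 3 = (d * e + b * ((c + e) mod 3)) mod 3"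
    using assms(2-5) by (elim less_3_cases[elim_format] disjE) simp_all
  have mod_assoc: "((a + c) mod 3 + e) mod 3 = (a + (c + e) mod 3) mod 3" for a c e :: nat
    by (simp add: mod_add_eq mod_add_left_eq mod_add_right_eq add.assoc)
  have eps: "eps ^ (b * c) * eps ^ (((b + d) mod 3) * e) = eps ^ (d * e) * eps ^ (b * ((c + e) mod 3))"
    unfolding power_add[symmetric] by (rule eps_pow_cong) (rule twist)
  have two: "(2::complex) ^ ((a + c) div 3 + (b + d) div 3) * 2 ^ (((a + c) mod 3 + e) div 3 + ((b + d) mod 3 + g) div 3)
     = 2 ^ ((c + e) div 3 + (d + g) div 3) * 2 ^ ((a + (c + e) mod 3) div 3 + (b + (d + g) mod 3) div 3)"
    unfolding power_add[symmetric] using carry[OF assms(1,3,5)] carry[OF assms(2,4,6)]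
    by (intro arg_cong[of _ _ "\<lambda>n. (2::complex) ^ n"]) linarith
  have coeff: "u * v * eps ^ (b * c) * 2 ^ ((a + c) div 3 + (b + d) div 3) * w * eps ^ (((b + d) mod 3) * e)
          * 2 ^ (((a + c) mod 3 + e) div 3 + ((b + d) mod 3 + g) div 3)
     = u * (v * w * eps ^ (d * e) * 2 ^ ((c + e) div 3 + (d + g) div 3)) * eps ^ (b * ((c + e) mod 3))
          * 2 ^ ((a + (c + e) mod 3) div 3 + (b + (d + g) mod 3) div 3)" (is "?lhs = ?rhs")
  proof -
    have "?lhs = u * v * w * ((eps ^ (b * c) * eps ^ (((b + d) mod 3) * e))
       * ((2::complex) ^ ((a + c) div 3 + (b + d) div 3) * 2 ^ (((a + c) mod 3 + e) div 3 + ((b + d) mod 3 + g) div 3)))"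
      by (simp only: mult_ac)
    also have "\<dots> = ?rhs" unfolding eps two by (simp only: mult_ac)
    finally show ?thesis .
  qed
  show ?thesis using assms by (simp add: dmul_mon coeff mod_assoc)
qed

lemma dmul_assoc:
  assumes "reduced f" "reduced g" "reduced h"
  shows "dmul (dmul f g) h = dmul f (dmul g h)"
proof -
  let ?F = "\<lambda>a b. mon (f a b) a b" and ?G = "\<lambda>a b. mon (g a b) a b" and ?H = "\<lambda>a b. mon (h a b) a b"
  have "dmul (dmul f g) h = (\<Sum>a<3. \<Sum>b<3. \<Sum>c<3. \<Sum>d<3. dmul (dmul (?F a b) (?G c d)) h)"
    unfolding dmul_expand[OF assms(1,2)] by (simp only: dmul_sum_left)
  also have "\<dots> = (\<Sum>a<3. \<Sum>b<3. \<Sum>c<3. \<Sum>d<3. \<Sum>e<3. \<Sum>r<3. dmul (dmul (?F a b) (?G c d)) (?H e r))"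
    by (subst dmul_expand_right[OF assms(3)]) (rule refl)
  also have "\<dots> = (\<Sum>a<3. \<Sum>b<3. \<Sum>c<3. \<Sum>d<3. \<Sum>e<3. \<Sum>r<3. dmul (?F a b) (dmul (?G c d) (?H e r)))"
    by (intro sum.cong refl) (simp add: dmul_mon_assoc)
  also have "\<dots> = (\<Sum>a<3. \<Sum>b<3. dmul (?F a b) (dmul g h))"
    unfolding dmul_expand[OF assms(2,3)] by (simp only: dmul_sum_right)
  also have "\<dots> = dmul f (dmul g h)"
    by (rule dmul_expand_left[OF assms(1), symmetric])
  finally show ?thesis .
qed

lemma D_simps [simp]: "carrier D = Dcar" "monoid.mult D = dmul" "one D = done_D"
  "ring.zero D = dzero" "ring.add D = dadd"
  by (simp_all add: D_def)

lemma dadd_eq: "dadd f g = f + g" and dzero_eq: "dzero = 0"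
  by (simp_all add: dadd_def dzero_def fun_eq_iff)

lemma done_eq: "done_D = mon 1 0 0" and sc_eq: "sc c = mon c 0 0"
  and gx_eq: "gx = mon 1 1 0" and gy_eq: "gy = mon 1 0 1"
  by (simp_all add: done_D_def sc_def gx_def gy_def mon_def fun_eq_iff)

lemma Dcar_iff: "f \<in> Dcar \<longleftrightarrow> reduced f \<and> (\<forall>i j. f i j \<in> Qeps)"
  by (auto simp: Dcar_def reduced_def)

lemma mon_Dcar [simp]: "a < 3 \<Longrightarrow> b < 3 \<Longrightarrow> c \<in> Qeps \<Longrightarrow> mon c a b \<in> Dcar"
  by (auto simp: Dcar_iff) (auto simp: mon_def)

lemma Dcar_add [simp]: "f \<in> Dcar \<Longrightarrow> g \<in> Dcar \<Longrightarrow> f + g \<in> Dcar"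
  by (auto simp: Dcar_iff)

lemma reduced_dmul [simp]: "reduced (dmul f g)"
  by (simp add: reduced_def dmul_def)

lemma dmul_closed: "f \<in> Dcar \<Longrightarrow> g \<in> Dcar \<Longrightarrow> dmul f g \<in> Dcar"
  by (simp add: Dcar_iff) (simp add: dmul_def)

lemma dmul_scalar_left: "reduced f \<Longrightarrow> dmul (mon c 0 0) f = (\<lambda>i j. c * f i j)"
  and dmul_scalar_right: "reduced f \<Longrightarrow> dmul f (mon c 0 0) = (\<lambda>i j. c * f i j)"
proof -
  assume f: "reduced f"
  have scale: "mon c 0 0 = (\<lambda>i j. c * mon 1 0 0 i j)" by (simp add: mon_def fun_eq_iff)
  have "dmul (mon 1 0 0) f = f" "dmul f (mon 1 0 0) = f"
    by (subst (1 2) mon_decomp[OF f], simp add: dmul_sum_left dmul_sum_right dmul_mon)+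
  thus "dmul (mon c 0 0) f = (\<lambda>i j. c * f i j)" "dmul f (mon c 0 0) = (\<lambda>i j. c * f i j)"
    by (subst scale, simp add: dmul_scale_left dmul_scale_right)+
qed

lemma dmul_one_left: "reduced f \<Longrightarrow> dmul done_D f = f"
  and dmul_one_right: "reduced f \<Longrightarrow> dmul f done_D = f"
  by (simp_all add: done_eq dmul_scalar_left dmul_scalar_right)

lemma ring_D: "ring D"
proof (rule ringI)
  show "abelian_group D"
  proof (rule abelian_groupI)
    fix x assume "x \<in> carrier D"
    thus "\<exists>y\<in>carrier D. y \<oplus>\<^bsub>D\<^esub> x = \<zero>\<^bsub>D\<^esub>"
      by (intro bexI[of _ "- x"]) (auto simp: Dcar_def dadd_eq dzero_eq)
  qed (auto simp: Dcar_def dadd_eq dzero_eq)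
  show "monoid D"
    by (rule monoidI; simp add: dmul_closed)
      (auto simp: dmul_assoc dmul_one_left dmul_one_right Dcar_iff, auto simp: done_D_def reduced_def)
qed (auto simp: dadd_eq dmul_add_left dmul_add_right)

interpretation Dr: ring D by (rule ring_D)

lemma a_inv_D: "f \<in> Dcar \<Longrightarrow> \<ominus>\<^bsub>D\<^esub> f = - f"
  by (rule Dr.add.inv_equality) (auto simp: Dcar_def dadd_eq dzero_eq)

lemma dstar_add: "dstar (f + g) = dstar f + dstar g"
  and dstar_zero: "dstar 0 = 0"
  and dstar_scale: "dstar (\<lambda>i j. c * f i j) = (\<lambda>i j. cnj c * dstar f i j)"
  and dstar_mon: "dstar (mon c a b) = mon (cnj c * eps ^ (a * b)) a b"
  by (simp_all add: dstar_def mon_def fun_eq_iff algebra_simps)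

lemma dstar_sum: "dstar (\<Sum>x\<in>A. F x) = (\<Sum>x\<in>A. dstar (F x))"
  using sum_comp_morphism[of dstar F A] dstar_zero dstar_add by (simp add: o_def)

lemma dstar_dstar: "dstar (dstar f) = f"
  using cnj_eps_mult_eps by (simp add: dstar_def fun_eq_iff mult.assoc)

lemma dstar_Dcar: "f \<in> Dcar \<Longrightarrow> dstar f \<in> Dcar"
  by (auto simp: Dcar_iff reduced_def dstar_def)

lemma dstar_dmul_mon:
  assumes "a < 3" "b < 3" "c < 3" "d < 3"
  shows "dstar (dmul (mon u a b) (mon v c d)) = dmul (dstar (mon v c d)) (dstar (mon u a b))"
proof -
  have e: "eps ^ (2 * (b * c)) * eps ^ (((a + c) mod 3) * ((b + d) mod 3)) = eps ^ (c * d) * eps ^ (a * b) * eps ^ (d * a)"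
    unfolding power_add[symmetric] using assms
    by (intro eps_pow_cong) (elim less_3_cases[elim_format] disjE; simp)
  have "cnj u * cnj v * eps ^ (2 * (b * c)) * 2 ^ ((a + c) div 3 + (b + d) div 3) * eps ^ (((a + c) mod 3) * ((b + d) mod 3))
     = cnj u * cnj v * 2 ^ ((a + c) div 3 + (b + d) div 3) * (eps ^ (2 * (b * c)) * eps ^ (((a + c) mod 3) * ((b + d) mod 3)))"
    by (simp only: mult_ac)
  also have "\<dots> = cnj v * eps ^ (c * d) * (cnj u * eps ^ (a * b)) * eps ^ (d * a) * 2 ^ ((a + c) div 3 + (b + d) div 3)"
    unfolding e by (simp only: mult_ac)
  finally have coeff: "cnj u * cnj v * eps ^ (2 * (b * c)) * 2 ^ ((a + c) div 3 + (b + d) div 3) * eps ^ (((a + c) mod 3) * ((b + d) mod 3))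
     = cnj v * eps ^ (c * d) * (cnj u * eps ^ (a * b)) * eps ^ (d * a) * 2 ^ ((a + c) div 3 + (b + d) div 3)" .
  show ?thesis using assms by (simp add: dmul_mon dstar_mon cnj_eps add.commute coeff flip: power_mult)
qed

lemma dstar_dmul:
  assumes "reduced f" "reduced g"
  shows "dstar (dmul f g) = dmul (dstar g) (dstar f)"
proof -
  let ?F = "\<lambda>a b. mon (f a b) a b" and ?G = "\<lambda>a b. mon (g a b) a b"
  have "dstar (dmul f g) = (\<Sum>a<3. \<Sum>b<3. \<Sum>c<3. \<Sum>d<3. dstar (dmul (?F a b) (?G c d)))"
    unfolding dmul_expand[OF assms] by (simp only: dstar_sum)
  also have "\<dots> = (\<Sum>a<3. \<Sum>b<3. \<Sum>c<3. \<Sum>d<3. dmul (dstar (?G c d)) (dstar (?F a b)))"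
    by (intro sum.cong refl) (simp add: dstar_dmul_mon)
  also have "\<dots> = dmul (dstar g) (dstar f)"
  proof -
    have "dstar f = (\<Sum>a<3. \<Sum>b<3. dstar (?F a b))" "dstar g = (\<Sum>c<3. \<Sum>d<3. dstar (?G c d))"
      by (subst mon_decomp[OF assms(1)] mon_decomp[OF assms(2)], simp only: dstar_sum)+
    thus ?thesis by (simp only: dmul_sum_left dmul_sum_right)
  qed
  finally show ?thesis .
qed

lemma d1_eq: "d1 = mon (eps\<^sup>2) 1 0 + mon 1 2 0 + mon 2 0 1"
  unfolding d1_def by (simp add: sc_eq gx_eq gy_eq dadd_eq dmul_mon inverse_eps, simp add: numeral_2_eq_2)

lemma d2_eq: "d2 = mon 1 0 0 + mon (- (eps\<^sup>2)) 1 1 + mon (- 1) 2 2"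
  and d3_eq: "d3 = mon 2 1 0 + mon (- 1) 2 0 + mon 1 1 2"
  and d4_eq: "d4 = mon 3 0 0 + mon (- 1) 1 0 + mon (- 1) 2 0"
  unfolding d2_def d3_def d4_def a_minus_def
  by (simp_all add: sc_eq gx_eq gy_eq dadd_eq dmul_mon inverse_eps a_inv_D done_eq mon_uminus,
      simp_all add: numeral_2_eq_2)

lemma d_Dcar: "d1 \<in> Dcar" "d2 \<in> Dcar" "d3 \<in> Dcar" "d4 \<in> Dcar"
  unfolding d1_eq d2_eq d3_eq d4_eq by simp_all

lemma norm_sum_zero: "dmul (dstar d1) d1 + dmul (dstar d2) d2 + dmul (dstar d3) d3 + dmul (dstar d4) d4 = 0"
proof (intro ext)
  fix i j :: nat
  have "i = 0 \<or> i = 1 \<or> i = 2 \<or> 3 \<le> i" "j = 0 \<or> j = 1 \<or> j = 2 \<or> 3 \<le> j" by auto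
  thus "(dmul (dstar d1) d1 + dmul (dstar d2) d2 + dmul (dstar d3) d3 + dmul (dstar d4) d4) i j = 0 i j"
    unfolding d1_eq d2_eq d3_eq d4_eq
    by (simp add: dstar_add dstar_mon dmul_add_left dmul_add_right dmul_mon)
      (elim disjE; simp add: mon_def eps_reduce; simp add: power2_eq_square algebra_simps eps_reduce)
qed

lemma norm_const_coeff:
  "dmul (dstar d1) d1 0 0 = -2" "dmul (dstar d2) d2 0 0 = -3"
  "dmul (dstar d3) d3 0 0 = -8" "dmul (dstar d4) d4 0 0 = 13"
  unfolding d1_eq d2_eq d3_eq d4_eq
  by (simp_all only: dstar_add dstar_mon dmul_add_left dmul_add_right, simp_all add: dmul_mon,
      simp_all add: mon_def eps_reduce, simp_all add: power2_eq_square algebra_simps eps_reduce)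

lemma norm_nonzero:
  "dmul (dstar d1) d1 \<noteq> 0" "dmul (dstar d2) d2 \<noteq> 0" "dmul (dstar d3) d3 \<noteq> 0" "dmul (dstar d4) d4 \<noteq> 0"
  using norm_const_coeff by (auto simp: fun_eq_iff intro!: exI[of _ 0])

lemma finsum_D_empty: "finsum D F {} = 0"
  using Dr.finsum_empty[of F] by (simp add: dzero_eq)

lemma finsum_D_Suc: "F \<in> {..<Suc n} \<rightarrow> Dcar \<Longrightarrow> finsum D F {..<Suc n} = F n + finsum D F {..<n}"
  using Dr.finsum_insert[of "{..<n}" n F] by (simp add: lessThan_Suc dadd_eq)

(* The four elements r_k = d_k* give a vanishing sum of nonzero norms r_k r_k*. *)
lemma D_not_formally_real: "\<not> formally_real_D (carrier D)"
proof -
  define d where "d = (\<lambda>i::nat. if i = 0 then d1 else if i = 1 then d2 else if i = 2 then d3 else d4)"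
  define r where "r = (\<lambda>i. dstar (d i))"
  have r_Dcar: "r i \<in> Dcar" for i unfolding r_def d_def using d_Dcar by (auto intro: dstar_Dcar)
  have r_norm: "dmul (r i) (dstar (r i)) = dmul (dstar (d i)) (d i)" for i
    unfolding r_def by (simp add: dstar_dstar)
  have nonzero: "\<forall>i<4. r i \<in> carrier D \<and> r i \<otimes>\<^bsub>D\<^esub> dstar (r i) \<noteq> \<zero>\<^bsub>D\<^esub>"
    using r_Dcar norm_nonzero by (auto simp: dzero_eq d_def r_norm)
  have closed: "(\<lambda>i. r i \<otimes>\<^bsub>D\<^esub> dstar (r i)) \<in> {..<n} \<rightarrow> Dcar" for n
    using r_Dcar by (simp add: dmul_closed dstar_Dcar)
  have "finsum D (\<lambda>i. r i \<otimes>\<^bsub>D\<^esub> dstar (r i)) {..<4} = 0"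
    using finsum_D_Suc[OF closed, of 3] finsum_D_Suc[OF closed, of 2] finsum_D_Suc[OF closed, of 1]
      finsum_D_Suc[OF closed, of 0] finsum_D_empty norm_sum_zero
    by (simp add: r_norm d_def eval_nat_numeral algebra_simps)
  thus ?thesis unfolding formally_real_D_def using nonzero
    by (auto intro!: exI[of _ 4] exI[of _ r] simp: dzero_eq)
qed

definition scalars :: "delt set" where
  "scalars = {mon c 0 0 | c. c \<in> Qeps}"

lemma scalars_Dcar: "scalars \<subseteq> Dcar"
  by (auto simp: scalars_def)

lemma scalar_central: "f \<in> Dcar \<Longrightarrow> dmul (mon c 0 0) f = dmul f (mon c 0 0)"
  by (simp add: Dcar_iff dmul_scalar_left dmul_scalar_right)

lemma subfield_scalars: "subfield scalars D"
proof (rule Dr.subfieldI)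
  show "subcring scalars D"
  proof (rule Dr.subcringI)
    show "subring scalars D"
      by (rule Dr.subringI) (auto simp: scalars_def scalars_Dcar done_eq a_inv_D mon_uminus dmul_mon
          dadd_eq mon_add)
    show "h1 \<otimes>\<^bsub>D\<^esub> h2 = h2 \<otimes>\<^bsub>D\<^esub> h1" if "h1 \<in> scalars" "h2 \<in> scalars" for h1 h2
      using that by (auto simp: scalars_def dmul_mon mult.commute)
  qed
  have one_nonzero: "done_D \<noteq> 0" by (simp add: done_eq mon_eq_0_iff)
  show "Units (D\<lparr>carrier := scalars\<rparr>) = scalars - {\<zero>\<^bsub>D\<^esub>}"
  proof
    show "Units (D\<lparr>carrier := scalars\<rparr>) \<subseteq> scalars - {\<zero>\<^bsub>D\<^esub>}"
      using one_nonzero by (auto simp: Units_def dzero_eq dmul_zero_right)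
    show "scalars - {\<zero>\<^bsub>D\<^esub>} \<subseteq> Units (D\<lparr>carrier := scalars\<rparr>)"
    proof
      fix u assume "u \<in> scalars - {\<zero>\<^bsub>D\<^esub>}"
      then obtain c where c: "c \<in> Qeps" "c \<noteq> 0" "u = mon c 0 0"
        by (auto simp: scalars_def dzero_eq mon_eq_0_iff)
      have "dmul (mon (inverse c) 0 0) u = done_D" "dmul u (mon (inverse c) 0 0) = done_D"
        using c by (simp_all add: dmul_mon done_eq)
      moreover have "mon (inverse c) 0 0 \<in> scalars" "u \<in> scalars"
        using c by (auto simp: scalars_def)
      ultimately show "u \<in> Units (D\<lparr>carrier := scalars\<rparr>)"
        unfolding Units_def by auto
    qed
  qed
qed

lemma independent_monomials:
  "distinct ps \<Longrightarrow> (\<forall>(a, b)\<in>set ps. a < 3 \<and> b < 3) \<Longrightarrow>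
     Dr.independent scalars (map (\<lambda>(a, b). mon 1 a b) ps)"
proof (induct ps)
  case (Cons p ps)
  obtain a b where p: "p = (a, b)" by fastforce
  have vanish: "v a b = 0" if "v \<in> Dr.Span scalars (map (\<lambda>(a, b). mon 1 a b) ps)" for v
  proof -
    have sub: "set (map (\<lambda>(a, b). mon 1 a b) ps) \<subseteq> carrier D" using Cons by auto
    have "Dr.combine Ks Us a b = 0"
      if "set Us \<subseteq> Dcar" "set Ks \<subseteq> scalars" "\<forall>u\<in>set Us. u a b = 0" for Ks Us
      using that
    proof (induct Ks Us rule: Dr.combine.induct)
      case (1 k Ks u Us)
      then obtain c where "k = mon c 0 0" by (auto simp: scalars_def)
      thus ?case using 1 by (simp add: dmul_scalar_left Dcar_iff dadd_eq)
    qed (auto simp: dzero_eq)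
    moreover have "\<forall>u\<in>set (map (\<lambda>(a, b). mon 1 a b) ps). u a b = 0"
      using Cons(2) p by (auto simp: mon_def)
    ultimately show ?thesis
      using that sub Dr.Span_eq_combine_set[OF subfield_scalars sub] by auto
  qed
  have "mon 1 a b \<notin> Dr.Span scalars (map (\<lambda>(a, b). mon 1 a b) ps)"
    using vanish[of "mon 1 a b"] by (auto simp: mon_def)
  thus ?case using Cons p by (auto intro!: Dr.li_Cons)
qed simp

lemma dimension_D: "Dr.dimension 9 scalars (carrier D)"
proof -
  define ps :: "(nat \<times> nat) list" where
    "ps = [(0,0),(0,1),(0,2),(1,0),(1,1),(1,2),(2,0),(2,1),(2,2)]"
  let ?B = "map (\<lambda>(a, b). mon 1 a b) ps"
  have ps: "\<forall>(a, b)\<in>set ps. a < 3 \<and> b < 3" by (auto simp: ps_def)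
  have sub: "set ?B \<subseteq> carrier D" by (auto simp: ps_def)
  have "carrier D \<subseteq> Dr.Span scalars ?B"
  proof
    fix f assume "f \<in> carrier D"
    hence f: "reduced f" "\<And>i j. f i j \<in> Qeps" by (auto simp: Dcar_iff)
    let ?Ks = "map (\<lambda>(a, b). mon (f a b) 0 0) ps"
    have "Dr.combine ?Ks ?B = sum_list (map (\<lambda>(a, b). mon (f a b) a b) ps)"
      using ps by (induct ps) (auto simp: dzero_eq dadd_eq dmul_mon)
    also have "\<dots> = f"
      by (subst (2) mon_decomp[OF f(1)]) (simp add: ps_def eval_nat_numeral add_ac)
    finally have "f = Dr.combine ?Ks ?B" by (rule sym)
    moreover have "set ?Ks \<subseteq> scalars" using f(2) by (auto simp: scalars_def ps_def)
    ultimately show "f \<in> Dr.Span scalars ?B"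
      unfolding Dr.Span_eq_combine_set[OF subfield_scalars sub] by blast
  qed
  hence "Dr.Span scalars ?B = carrier D"
    using Dr.Span_in_carrier[OF _ sub] scalars_Dcar by auto
  moreover have "Dr.independent scalars ?B"
    by (rule independent_monomials) (auto simp: ps_def)
  moreover have "length ?B = 9" by (simp add: ps_def)
  ultimately show ?thesis using Dr.dimensionI[OF subfield_scalars] by metis
qed

lemma gx_Dcar: "gx \<in> Dcar" and gy_Dcar: "gy \<in> Dcar"
  by (simp_all add: gx_eq gy_eq)

lemma gx_not_scalar: "gx \<notin> scalars"
  by (auto simp: scalars_def gx_eq mon_def fun_eq_iff)

lemma gx_gy_noncommuting: "dmul gx gy \<noteq> dmul gy gx"
  using eps_ne_one by (simp add: gx_eq gy_eq dmul_mon mon_eq_iff)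

locale maximal_subfield =
  fixes K :: "delt set"
  assumes maximal: "maximal_subfield_D K"
begin

lemma subfield_K: "subfield K D" and centralizer_K: "centralizer_D K = K"
  using maximal by (simp_all add: maximal_subfield_D_def)

lemma subring_K: "subring K D"
  using subfieldE(1)[OF subfield_K] .

lemma K_Dcar: "K \<subseteq> Dcar" and K_one: "done_D \<in> K"
  and K_mult: "a \<in> K \<Longrightarrow> b \<in> K \<Longrightarrow> dmul a b \<in> K"
  and K_add: "a \<in> K \<Longrightarrow> b \<in> K \<Longrightarrow> a + b \<in> K"
  using subfieldE(3)[OF subfield_K] subringE(3,6,7)[OF subring_K] by (simp_all add: dadd_eq)

lemma K_uminus: "a \<in> K \<Longrightarrow> - a \<in> K"
  using subringE(5)[OF subring_K] K_Dcar a_inv_D by fastforce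

lemma reduced_K: "k \<in> K \<Longrightarrow> reduced k"
  using K_Dcar by (auto simp: Dcar_iff)

lemma K_commute: "a \<in> K \<Longrightarrow> b \<in> K \<Longrightarrow> dmul a b = dmul b a"
  using subfieldE(4)[OF subfield_K] by simp

lemma scalars_subset_K: "scalars \<subseteq> K"
proof
  fix z assume "z \<in> scalars"
  hence "z \<in> centralizer_D K"
    using K_Dcar scalars_Dcar by (auto simp: centralizer_D_def scalars_def scalar_central)
  thus "z \<in> K" using centralizer_K by simp
qed

(* K is noncentral, since otherwise x would centralise it. *)
lemma K_not_scalars: "\<not> K \<subseteq> scalars"
proof
  assume "K \<subseteq> scalars"
  hence "gx \<in> centralizer_D K"
    using gx_Dcar by (auto simp: centralizer_D_def scalars_def gx_eq dmul_mon mult.commute)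
  thus False using centralizer_K \<open>K \<subseteq> scalars\<close> gx_not_scalar by auto
qed

lemma K_scale: "c \<in> Qeps \<Longrightarrow> a \<in> K \<Longrightarrow> (\<lambda>i j. c * a i j) \<in> K"
  using K_mult[of "mon c 0 0" a] scalars_subset_K by (auto simp: scalars_def dmul_scalar_left reduced_K)

lemma dimension_K: "Dr.dimension 3 scalars K"
proof -
  have "subalgebra scalars K D"
    by (rule subalgebra.intro, rule subring.axioms(1)[OF subring_K])
      (use scalars_subset_K K_mult in \<open>auto simp: subalgebra_axioms_def\<close>)
  hence "Dr.finite_dimension scalars K"
    using Dr.subalbegra_incl_imp_finite_dimension[OF subfield_scalars
          Dr.finite_dimensionI[OF dimension_D]] K_Dcar by simp
  then obtain n where dim_n: "Dr.dimension n scalars K" by auto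
  obtain m where dim_m: "Dr.dimension m K (carrier D)"
    using Dr.finite_dimension_larger_field[OF subfield_scalars subfield_K scalars_subset_K dimension_D]
    by auto
  have "Dr.dimension (n * m) scalars (carrier D)"
    by (rule Dr.telescopic_base[OF subfield_scalars subfield_K dim_n dim_m])
  hence "n * m = 9" using Dr.dimension_is_inj[OF subfield_scalars _ dimension_D] by blast
  moreover have "n \<noteq> 1"
    using Dr.dimension_one_eq[OF subfield_scalars] dim_n K_one K_not_scalars by auto
  moreover have "m \<noteq> 1"
  proof
    assume "m = 1"
    hence "carrier D = K" using Dr.dimension_one_eq[OF subfield_K] dim_m Dr.one_closed by simp
    thus False using K_commute gx_Dcar gy_Dcar gx_gy_noncommuting by auto
  qed
  ultimately show ?thesis using dim_n factor_nine by blast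
qed

sublocale KF: field "D\<lparr>carrier := K\<rparr>"
  by (rule Dr.subfield_iff(2)[OF subfield_K])

lemma KF_Span: "KF.Span = Dr.Span"
  using Dr.Span_consistent[OF subring_K] .

lemma scalars_subfield_K: "subfield scalars (D\<lparr>carrier := K\<rparr>)"
  using Dr.subfield_iff(2)[OF subfield_scalars] scalars_subset_K by (intro KF.subfield_iff(1)) simp_all

lemma KF_dimension: "KF.dimension 3 scalars (carrier (D\<lparr>carrier := K\<rparr>))"
proof -
  obtain Us where Us: "set Us \<subseteq> carrier D" "Dr.independent scalars Us" "length Us = 3" "Dr.Span scalars Us = K"
    using Dr.exists_base[OF subfield_scalars dimension_K] by blast
  have "set Us \<subseteq> K" using Dr.Span_base_incl[OF subfield_scalars Us(1)] Us(4) by simp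
  hence "KF.independent scalars Us" using Dr.independent_in_subring[OF subring_K _ Us(2)] by simp
  thus ?thesis using KF.dimensionI[OF scalars_subfield_K] Us KF_Span by fastforce
qed

end

locale stable_maximal_subfield = maximal_subfield +
  assumes stable: "dstar ` K \<subseteq> K"
begin

lemma K_dstar: "k \<in> K \<Longrightarrow> dstar k \<in> K"
  using stable by auto

(* Every k \<in> K is p/2 + q/(2s) with the hermitian elements p = k + dstar k and
   q = s (k - dstar k), where s = 2 eps + 1 = sqrt(-3); so if k is not central, p or q is not. *)
lemma hermitian_noncentral: "\<exists>h\<in>K. h \<notin> scalars \<and> dstar h = h"
proof (rule ccontr)
  assume no_herm: "\<not> ?thesis"
  obtain k where k: "k \<in> K" "k \<notin> scalars" using K_not_scalars by auto
  define s where "s = 2 * eps + 1"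
  have s: "s \<in> Qeps" "s \<noteq> 0" "cnj s = - s"
    using Im_eps by (auto simp: s_def eps_reduce complex_eq_iff)
  define p where "p = k + dstar k"
  define q where "q = (\<lambda>i j. s * (k + - dstar k) i j)"
  have "p \<in> K" "q \<in> K"
    unfolding p_def q_def using k K_dstar K_add K_uminus K_scale s(1) by blast+
  moreover have "dstar p = p" unfolding p_def by (simp add: dstar_add dstar_dstar add.commute)
  moreover have "dstar q = q" unfolding q_def dstar_scale
    using cnj_eps_mult_eps by (simp add: dstar_def fun_eq_iff s(3) algebra_simps)
  ultimately have "p \<in> scalars" "q \<in> scalars" using no_herm by blast+
  then obtain a b where ab: "a \<in> Qeps" "b \<in> Qeps" "p = mon a 0 0" "q = mon b 0 0"
    by (auto simp: scalars_def)
  have "k = mon (a / 2 + b / (2 * s)) 0 0"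
  proof (intro ext)
    fix i j
    have "k i j = p i j / 2 + q i j / (2 * s)"
      using s(2) by (simp add: p_def q_def field_simps)
    thus "k i j = mon (a / 2 + b / (2 * s)) 0 0 i j" using ab by (simp add: mon_def add_divide_distrib)
  qed
  hence "k \<in> scalars" using ab s(1) by (auto simp: scalars_def)
  thus False using k by simp
qed

(* Since [K : Q(eps)] = 3 is prime, a noncentral hermitian h yields the basis h^2, h, 1. *)
lemma hermitian_basis:
  "\<exists>h\<in>K. dstar h = h \<and> KF.independent scalars [dmul h h, h, done_D]
          \<and> KF.Span scalars [dmul h h, h, done_D] = K"
proof -
  obtain h where h: "h \<in> K" "h \<notin> scalars" "dstar h = h" using hermitian_noncentral by blast
  have "KF.exp_base h 3 = [dmul h h, h, done_D]"
    using reduced_K[OF h(1)] by (simp add: KF.exp_base_def eval_nat_numeral dmul_one_left)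
  thus ?thesis
    using KF.prime_degree_exp_base[OF scalars_subfield_K KF_dimension _ _ h(2)] h by auto
qed

end

locale hermitian_generator = stable_maximal_subfield +
  fixes h :: delt
  assumes h_K: "h \<in> K" and h_hermitian: "dstar h = h"
    and basis_independent: "KF.independent scalars [dmul h h, h, done_D]"
    and basis_spans: "KF.Span scalars [dmul h h, h, done_D] = K"
begin

definition hpoly :: "complex \<Rightarrow> complex \<Rightarrow> complex \<Rightarrow> delt" where
  "hpoly a b c = (\<lambda>i j. a * dmul h h i j + b * h i j + c * done_D i j)"

lemma hpoly_split: "hpoly a b c = (\<lambda>i j. a * dmul h h i j) + (\<lambda>i j. b * h i j) + (\<lambda>i j. c * done_D i j)"
  by (simp add: hpoly_def fun_eq_iff)

lemma hpoly_add: "hpoly a b c + hpoly a' b' c' = hpoly (a + a') (b + b') (c + c')"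
  and hpoly_diff: "hpoly a b c - hpoly a' b' c' = hpoly (a - a') (b - b') (c - c')"
  and hpoly_scale: "(\<lambda>i j. z * hpoly a b c i j) = hpoly (z * a) (z * b) (z * c)"
  and hpoly_one: "done_D = hpoly 0 0 1"
  by (simp_all add: hpoly_def fun_eq_iff algebra_simps)

lemma hpoly_combine: "KF.combine [mon a 0 0, mon b 0 0, mon c 0 0] [dmul h h, h, done_D] = hpoly a b c"
  using reduced_K[OF h_K] reduced_K[OF K_one]
  by (simp add: hpoly_def dmul_scalar_left dadd_eq dzero_eq fun_eq_iff)

lemma hpoly_surj: "k \<in> K \<Longrightarrow> \<exists>a b c. a \<in> Qeps \<and> b \<in> Qeps \<and> c \<in> Qeps \<and> k = hpoly a b c"
proof -
  assume k: "k \<in> K"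
  have sub: "set [dmul h h, h, done_D] \<subseteq> carrier (D\<lparr>carrier := K\<rparr>)"
    using K_mult[OF h_K h_K] h_K K_one by simp
  have "k \<in> KF.Span scalars [dmul h h, h, done_D]" using k by (simp only: basis_spans)
  then obtain Ks where Ks: "k = KF.combine Ks [dmul h h, h, done_D]" "length Ks = 3" "set Ks \<subseteq> scalars"
    unfolding KF.Span_eq_combine_set_length_version[OF scalars_subfield_K sub] by auto
  then obtain k1 k2 k3 where "Ks = [k1, k2, k3]" by (auto simp: numeral_3_eq_3 length_Suc_conv)
  thus ?thesis using Ks hpoly_combine by (fastforce simp: scalars_def)
qed

lemma hpoly_inj:
  assumes "a \<in> Qeps" "b \<in> Qeps" "c \<in> Qeps" "a' \<in> Qeps" "b' \<in> Qeps" "c' \<in> Qeps"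
    and "hpoly a b c = hpoly a' b' c'"
  shows "a = a' \<and> b = b' \<and> c = c'"
proof -
  let ?Ks = "[mon (a - a') 0 0, mon (b - b') 0 0, mon (c - c') 0 0]"
  have "set ?Ks \<subseteq> scalars" using assms by (auto simp: scalars_def)
  moreover have "KF.combine ?Ks [dmul h h, h, done_D] = \<zero>\<^bsub>D\<lparr>carrier := K\<rparr>\<^esub>"
    using assms(7) hpoly_combine hpoly_diff[of a b c a' b' c'] by (simp add: dzero_eq)
  ultimately have "set (take 3 ?Ks) \<subseteq> {\<zero>\<^bsub>D\<lparr>carrier := K\<rparr>\<^esub>}"
    using KF.independent_imp_trivial_combine[OF scalars_subfield_K basis_independent] by fastforce
  thus ?thesis by (simp add: dzero_eq mon_eq_0_iff)
qed

lemma dstar_hpoly: "dstar (hpoly a b c) = hpoly (cnj a) (cnj b) (cnj c)"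
proof -
  have "dstar (dmul h h) = dmul h h"
    using dstar_dmul[OF reduced_K[OF h_K] reduced_K[OF h_K]] h_hermitian by simp
  moreover have "dstar done_D = done_D" by (simp add: done_eq dstar_mon)
  ultimately show ?thesis by (simp only: hpoly_split dstar_add dstar_scale h_hermitian)
qed

lemma dmul_hpoly_left: "dmul (hpoly a b c) y = (\<lambda>i j. a * dmul (dmul h h) y i j + b * dmul h y i j + c * dmul done_D y i j)"
  and dmul_hpoly_right: "dmul y (hpoly a b c) = (\<lambda>i j. a * dmul y (dmul h h) i j + b * dmul y h i j + c * dmul y done_D i j)"
  unfolding hpoly_split by (simp_all add: dmul_add_left dmul_add_right dmul_scale_left dmul_scale_right fun_eq_iff)

(* Since h^3 is hermitian, its coordinates are fixed by conjugation, hence real. *)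
lemma cube_real_coordinates:
  "\<exists>a b c. a \<in> Qeps \<and> b \<in> Qeps \<and> c \<in> Qeps \<and> Im a = 0 \<and> Im b = 0 \<and> Im c = 0
     \<and> dmul h (dmul h h) = hpoly a b c"
proof -
  obtain a b c where abc: "a \<in> Qeps" "b \<in> Qeps" "c \<in> Qeps" "dmul h (dmul h h) = hpoly a b c"
    using hpoly_surj K_mult[OF h_K K_mult[OF h_K h_K]] by blast
  have "dstar (dmul h (dmul h h)) = dmul h (dmul h h)"
    using reduced_K[OF h_K] h_hermitian by (simp add: dstar_dmul dmul_assoc)
  hence "hpoly (cnj a) (cnj b) (cnj c) = hpoly a b c" using abc(4) dstar_hpoly by simp
  hence "cnj a = a \<and> cnj b = b \<and> cnj c = c" using hpoly_inj[of "cnj a" "cnj b" "cnj c" a b c] abc by simp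
  thus ?thesis using abc by (auto simp: complex_eq_iff)
qed

end

(* A *-compatible embedding of a *-stable subfield into C witnesses formal reality: it maps
   r r* to |chi r|^2, so a sum of nonzero norms maps to a positive real. *)
lemma formally_real_by_character:
  fixes chi :: "delt \<Rightarrow> complex"
  assumes K: "subring K D" and stable: "\<And>x. x \<in> K \<Longrightarrow> dstar x \<in> K"
    and chi_add: "\<And>x y. x \<in> K \<Longrightarrow> y \<in> K \<Longrightarrow> chi (x + y) = chi x + chi y"
    and chi_mult: "\<And>x y. x \<in> K \<Longrightarrow> y \<in> K \<Longrightarrow> chi (dmul x y) = chi x * chi y"
    and chi_dstar: "\<And>x. x \<in> K \<Longrightarrow> chi (dstar x) = cnj (chi x)"
    and chi_nonzero: "\<And>x. x \<in> K \<Longrightarrow> x \<noteq> 0 \<Longrightarrow> chi x \<noteq> 0"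
  shows "formally_real_D K"
  unfolding formally_real_D_def
proof (intro allI impI notI)
  fix n :: nat and r :: "nat \<Rightarrow> delt"
  assume n: "n \<ge> 1" and r: "\<forall>i<n. r i \<in> K \<and> r i \<otimes>\<^bsub>D\<^esub> dstar (r i) \<noteq> \<zero>\<^bsub>D\<^esub>"
    and sum_zero: "finsum D (\<lambda>i. r i \<otimes>\<^bsub>D\<^esub> dstar (r i)) {..<n} = \<zero>\<^bsub>D\<^esub>"
  have K_Dcar: "K \<subseteq> Dcar" and zero_K: "0 \<in> K"
    using subringE(1,2)[OF K] by (simp_all add: dzero_eq)
  have K_add: "x + y \<in> K" if "x \<in> K" "y \<in> K" for x y
    using subringE(7)[OF K] that by (simp add: dadd_eq)
  have chi_zero: "chi 0 = 0" using chi_add[OF zero_K zero_K] by simp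
  have chi_finsum: "finsum D F {..<m} \<in> K \<and> chi (finsum D F {..<m}) = (\<Sum>i<m. chi (F i))"
    if "\<forall>i<m. F i \<in> K" for F and m :: nat
    using that
  proof (induct m)
    case 0
    have "finsum D F {..<0} = 0" by (simp only: lessThan_0 finsum_D_empty)
    thus ?case using zero_K chi_zero by (simp only: lessThan_0 sum.empty)
  next
    case (Suc m)
    hence "F \<in> {..<Suc m} \<rightarrow> Dcar" using K_Dcar by auto
    hence split: "finsum D F {..<Suc m} = F m + finsum D F {..<m}" by (rule finsum_D_Suc)
    have Fm: "F m \<in> K" and IH: "finsum D F {..<m} \<in> K" "chi (finsum D F {..<m}) = (\<Sum>i<m. chi (F i))"
      using Suc by auto
    have "chi (F m + finsum D F {..<m}) = (\<Sum>i<Suc m. chi (F i))"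
      unfolding sum.lessThan_Suc chi_add[OF Fm IH(1)] IH(2) by (rule add.commute)
    thus ?case unfolding split using K_add[OF Fm IH(1)] by blast
  qed
  have rK: "r i \<in> K" "dstar (r i) \<in> K" "r i \<noteq> 0" if "i < n" for i
    using r that stable by (auto simp: dzero_eq dmul_zero_left)
  have "chi (finsum D (\<lambda>i. dmul (r i) (dstar (r i))) {..<n}) = (\<Sum>i<n. chi (r i) * cnj (chi (r i)))"
    using chi_finsum[of n "\<lambda>i. dmul (r i) (dstar (r i))"] subringE(6)[OF K] rK
    by (simp add: chi_mult chi_dstar)
  also have "\<dots> = complex_of_real (\<Sum>i<n. (cmod (chi (r i)))\<^sup>2)"
    by (simp only: complex_norm_square of_real_sum)
  finally have "complex_of_real (\<Sum>i<n. (cmod (chi (r i)))\<^sup>2) = 0"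
    using sum_zero chi_zero by (simp add: dzero_eq)
  hence "(\<Sum>i<n. (cmod (chi (r i)))\<^sup>2) = 0" by (simp only: of_real_eq_0_iff)
  moreover have "(\<Sum>i<n. (cmod (chi (r i)))\<^sup>2) > 0"
    using n rK chi_nonzero by (intro sum_pos) (auto simp: lessThan_empty_iff)
  ultimately show False by simp
qed

(* With h^3 = a0 h^2 + b0 h + c0 (real coefficients) and a real root rho of
   t^3 = a0 t^2 + b0 t + c0, evaluating h at rho is a *-compatible embedding chi : K \<rightarrow> C. *)

locale real_character = hermitian_generator +
  fixes a0 b0 c0 :: complex and rho :: real
  assumes coeffs: "a0 \<in> Qeps" "b0 \<in> Qeps" "c0 \<in> Qeps"
    and cube: "dmul h (dmul h h) = hpoly a0 b0 c0"
    and coeffs_real: "Im a0 = 0" "Im b0 = 0" "Im c0 = 0"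
    and root: "rho ^ 3 = Re a0 * rho\<^sup>2 + Re b0 * rho + Re c0"
begin

abbreviation "r \<equiv> complex_of_real rho"

lemma root_complex: "r ^ 3 = a0 * r\<^sup>2 + b0 * r + c0"
proof -
  have "a0 = of_real (Re a0)" "b0 = of_real (Re b0)" "c0 = of_real (Re c0)"
    using coeffs_real by (simp_all add: complex_eq_iff)
  hence "a0 * r\<^sup>2 + b0 * r + c0 = of_real (Re a0 * rho\<^sup>2 + Re b0 * rho + Re c0)" by simp
  thus ?thesis using root by (metis of_real_power)
qed

definition chi :: "delt \<Rightarrow> complex" where
  "chi k = (THE z. \<exists>a b c. a \<in> Qeps \<and> b \<in> Qeps \<and> c \<in> Qeps \<and> k = hpoly a b c \<and> z = a * r\<^sup>2 + b * r + c)"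

lemma chi_hpoly: "a \<in> Qeps \<Longrightarrow> b \<in> Qeps \<Longrightarrow> c \<in> Qeps \<Longrightarrow> chi (hpoly a b c) = a * r\<^sup>2 + b * r + c"
  unfolding chi_def by (rule the_equality) (blast, metis hpoly_inj)

lemma K_cases:
  assumes "x \<in> K"
  obtains a b c where "a \<in> Qeps" "b \<in> Qeps" "c \<in> Qeps" "x = hpoly a b c"
  using hpoly_surj[OF assms] by blast

lemma chi_add: "x \<in> K \<Longrightarrow> y \<in> K \<Longrightarrow> chi (x + y) = chi x + chi y"
  by (elim K_cases) (simp add: hpoly_add chi_hpoly algebra_simps)

lemma chi_scale: "z \<in> Qeps \<Longrightarrow> x \<in> K \<Longrightarrow> chi (\<lambda>i j. z * x i j) = z * chi x"
  by (elim K_cases) (simp add: hpoly_scale chi_hpoly algebra_simps)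

lemma chi_dstar: "x \<in> K \<Longrightarrow> chi (dstar x) = cnj (chi x)"
  by (elim K_cases) (simp add: dstar_hpoly chi_hpoly)

(* Multiplication by h acts on coordinates as the companion matrix, i.e. as rho. *)
lemma chi_mult_h:
  assumes "x \<in> K" shows "chi (dmul h x) = r * chi x"
proof -
  obtain a b c where abc: "a \<in> Qeps" "b \<in> Qeps" "c \<in> Qeps" and x: "x = hpoly a b c"
    using assms by (rule K_cases)
  have "dmul h x = hpoly (a * a0 + b) (a * b0 + c) (a * c0)"
    unfolding x dmul_hpoly_right cube using reduced_K[OF h_K]
    by (simp add: dmul_one_right hpoly_def fun_eq_iff algebra_simps)
  hence "chi (dmul h x) = a * (a0 * r\<^sup>2 + b0 * r + c0) + b * r\<^sup>2 + c * r"
    using abc coeffs by (simp add: chi_hpoly algebra_simps)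
  also have "\<dots> = r * chi x"
    unfolding root_complex[symmetric] x using abc
    by (simp add: chi_hpoly algebra_simps power2_eq_square power3_eq_cube)
  finally show ?thesis .
qed

lemma chi_mult:
  assumes "x \<in> K" and y: "y \<in> K" shows "chi (dmul x y) = chi x * chi y"
proof -
  obtain a b c where abc: "a \<in> Qeps" "b \<in> Qeps" "c \<in> Qeps" and x: "x = hpoly a b c"
    using assms(1) by (rule K_cases)
  have hy: "dmul h y \<in> K" and hhy: "dmul h (dmul h y) \<in> K" using K_mult h_K y by simp_all
  have "dmul x y = (\<lambda>i j. a * dmul h (dmul h y) i j) + (\<lambda>i j. b * dmul h y i j) + (\<lambda>i j. c * y i j)"
    unfolding x dmul_hpoly_left dmul_assoc[OF reduced_K[OF h_K] reduced_K[OF h_K] reduced_K[OF y]]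
      dmul_one_left[OF reduced_K[OF y]]
    by (simp add: fun_eq_iff)
  hence "chi (dmul x y) = a * chi (dmul h (dmul h y)) + b * chi (dmul h y) + c * chi y"
    using abc hy hhy y K_scale K_add by (simp add: chi_add chi_scale)
  also have "\<dots> = (a * r\<^sup>2 + b * r + c) * chi y"
    using chi_mult_h hy y by (simp add: algebra_simps power2_eq_square)
  finally show ?thesis using abc x by (simp add: chi_hpoly)
qed

(* chi is injective on the field K: a nonzero x has an inverse y, and chi y * chi x = 1. *)
lemma chi_nonzero: "x \<in> K \<Longrightarrow> x \<noteq> 0 \<Longrightarrow> chi x \<noteq> 0"
proof -
  assume x: "x \<in> K" "x \<noteq> 0"
  hence "x \<in> Units (D\<lparr>carrier := K\<rparr>)" using subfield.subfield_Units[OF subfield_K] by (simp add: dzero_eq)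
  then obtain y where y: "y \<in> K" "dmul y x = done_D" by (auto simp: Units_def)
  hence "chi y * chi x = 1" using chi_mult[OF y(1) x(1)] by (simp add: hpoly_one chi_hpoly)
  thus ?thesis by auto
qed

lemma formally_real: "formally_real_D K"
  by (rule formally_real_by_character[OF subring_K K_dstar chi_add chi_mult chi_dstar chi_nonzero])

end

lemma (in hermitian_generator) formally_real: "formally_real_D K"
proof -
  obtain a b c where abc: "a \<in> Qeps" "b \<in> Qeps" "c \<in> Qeps" "Im a = 0" "Im b = 0" "Im c = 0"
    "dmul h (dmul h h) = hpoly a b c" using cube_real_coordinates by blast
  obtain rho where "rho ^ 3 = Re a * rho\<^sup>2 + Re b * rho + Re c" using real_cubic_root by blast
  then interpret real_character K h a b c rho
    using abc by unfold_locales auto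
  show ?thesis by (rule formally_real)
qed

lemma (in stable_maximal_subfield) formally_real: "formally_real_D K"
proof -
  obtain h where "h \<in> K" "dstar h = h" "KF.independent scalars [dmul h h, h, done_D]"
    "KF.Span scalars [dmul h h, h, done_D] = K" using hermitian_basis by blast
  then interpret hermitian_generator K h by unfold_locales
  show ?thesis by (rule formally_real)
qed

theorem mainTheorem11:
  shows "(\<forall>K. maximal_subfield_D K \<and> dstar ` K \<subseteq> K \<longrightarrow> formally_real_D K)
    \<and> \<not> formally_real_D (carrier D)
    \<and> dstar d1 \<otimes>\<^bsub>D\<^esub> d1 \<oplus>\<^bsub>D\<^esub> dstar d2 \<otimes>\<^bsub>D\<^esub> d2 \<oplus>\<^bsub>D\<^esub> dstar d3 \<otimes>\<^bsub>D\<^esub> d3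
        \<oplus>\<^bsub>D\<^esub> dstar d4 \<otimes>\<^bsub>D\<^esub> d4 = \<zero>\<^bsub>D\<^esub>"
proof (intro conjI allI impI)
  fix K assume "maximal_subfield_D K \<and> dstar ` K \<subseteq> K"
  then interpret stable_maximal_subfield K by unfold_locales auto
  show "formally_real_D K" by (rule formally_real)
next
  show "\<not> formally_real_D (carrier D)" by (rule D_not_formally_real)
next
  show "dstar d1 \<otimes>\<^bsub>D\<^esub> d1 \<oplus>\<^bsub>D\<^esub> dstar d2 \<otimes>\<^bsub>D\<^esub> d2 \<oplus>\<^bsub>D\<^esub> dstar d3 \<otimes>\<^bsub>D\<^esub> d3
        \<oplus>\<^bsub>D\<^esub> dstar d4 \<otimes>\<^bsub>D\<^esub> d4 = \<zero>\<^bsub>D\<^esub>"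
    using norm_sum_zero by (simp add: dadd_eq dzero_eq)
qed

end
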